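(* Let $\kappa\in\mathbb{K}$, let $(\mathfrak{g},[-,-,-]_\mathfrak{g},\alpha_\mathfrak{g})$ and $(\mathfrak{h},[-,-,-]_\mathfrak{h},\alpha_\mathfrak{h})$ be Hom-Lie triple systems and $\theta$ an action of $\mathfrak{g}$ on $\mathfrak{h}$. A linear map $\mathcal{A}:\mathfrak{h}\to\mathfrak{g}$ is a $\kappa$-weighted $\mathcal{O}$-operator from $\mathfrak{h}$ to $\mathfrak{g}$ with respect to $\theta$ if and only if the linear map $N_\mathcal{A}:\mathfrak{g}\oplus\mathfrak{h}\to\mathfrak{g}\oplus\mathfrak{h}$, $N_\mathcal{A}(x+u)=x+\mathcal{A}u$ (block matrix $\begin{pmatrix}\mathrm{id}&\mathcal{A}\\0&0\end{pmatrix}$), is a Nijenhuis operator on the semidirect product Hom-Lie triple system $\mathfrak{g}\ltimes_\theta\mathfrak{h}$.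
   Context: All vector spaces are over a field $\mathbb{K}$ of characteristic zero. A Hom-Lie triple system $(\mathfrak{g},[-,-,-]_\mathfrak{g},\alpha_\mathfrak{g})$ is a vector space $\mathfrak{g}$ with a trilinear map $[-,-,-]_\mathfrak{g}$ and a linear map $\alpha_\mathfrak{g}$ with $\alpha_\mathfrak{g}([x,y,z]_\mathfrak{g})=[\alpha_\mathfrak{g}(x),\alpha_\mathfrak{g}(y),\alpha_\mathfrak{g}(z)]_\mathfrak{g}$ such that for all $x,y,z,a,b$: $[x,y,z]_\mathfrak{g}+[y,x,z]_\mathfrak{g}=0$; $[x,y,z]_\mathfrak{g}+[z,x,y]_\mathfrak{g}+[y,z,x]_\mathfrak{g}=0$; $[\alpha_\mathfrak{g}(a),\alpha_\mathfrak{g}(b),[x,y,z]_\mathfrak{g}]_\mathfrak{g}=[[a,b,x]_\mathfrak{g},\alpha_\mathfrak{g}(y),\alpha_\mathfrak{g}(z)]_\mathfrak{g}+[\alpha_\mathfrak{g}(x),[a,b,y]_\mathfrak{g},\alpha_\mathfrak{g}(z)]_\mathfrak{g}+[\alpha_\mathfrak{g}(x),\alpha_\mathfrak{g}(y),[a,b,z]_\mathfrak{g}]_\mathfrak{g}$. A representation of $\mathfrak{g}$ on $(V,\beta)$ is a bilinear map $\theta:\mathfrak{g}\times\mathfrak{g}\to\mathrm{End}(V)$ such that, with $D(x,y)=\theta(y,x)-\theta(x,y)$, for all $x,y,a,b$: $\theta(\alpha_\mathfrak{g}(x),\alpha_\mathfrak{g}(y))\circ\beta=\beta\circ\theta(x,y)$;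 $\theta(\alpha_\mathfrak{g}(a),\alpha_\mathfrak{g}(b))\theta(x,y)-\theta(\alpha_\mathfrak{g}(y),\alpha_\mathfrak{g}(b))\theta(x,a)-\theta(\alpha_\mathfrak{g}(x),[y,a,b]_\mathfrak{g})\circ\beta+D(\alpha_\mathfrak{g}(y),\alpha_\mathfrak{g}(a))\theta(x,b)=0$; $\theta(\alpha_\mathfrak{g}(a),\alpha_\mathfrak{g}(b))D(x,y)-D(\alpha_\mathfrak{g}(x),\alpha_\mathfrak{g}(y))\theta(a,b)+\theta([x,y,a]_\mathfrak{g},\alpha_\mathfrak{g}(b))\circ\beta+\theta(\alpha_\mathfrak{g}(a),[x,y,b]_\mathfrak{g})\circ\beta=0$. An action of $\mathfrak{g}$ on a Hom-Lie triple system $(\mathfrak{h},[-,-,-]_\mathfrak{h},\alpha_\mathfrak{h})$ is a representation $\theta$ of $\mathfrak{g}$ on $(\mathfrak{h},\alpha_\mathfrak{h})$ such that for all $x,y\in\mathfrak{g}$, $u,v,w\in\mathfrak{h}$: $\theta(\alpha_\mathfrak{g}(x),\alpha_\mathfrak{g}(y))[u,v,w]_\mathfrak{h}=[\theta(x,y)u,\alpha_\mathfrak{h}(v),\alpha_\mathfrak{h}(w)]_\mathfrak{h}+[\alpha_\mathfrak{h}(u),\theta(x,y)v,\alpha_\mathfrak{h}(w)]_\mathfrak{h}+[\alpha_\mathfrak{h}(u),\alpha_\mathfrak{h}(v),\theta(x,y)w]_\mathfrak{h}$ and $\theta(\alpha_\mathfrak{g}(x),\alpha_\mathfrak{g}(y))[u,v,w]_\mathfrak{h}=[\alpha_\mathfrak{h}(u),\alpha_\mathfrak{h}(v),\theta(x,y)w]_\mathfrak{h}=0$.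 The semidirect product $\mathfrak{g}\ltimes_\theta\mathfrak{h}$ is $\mathfrak{g}\oplus\mathfrak{h}$ with twist map $(\alpha_\mathfrak{g}\oplus\alpha_\mathfrak{h})(x+u)=\alpha_\mathfrak{g}(x)+\alpha_\mathfrak{h}(u)$ and bracket $[x+u,y+v,z+w]_\theta=[x,y,z]_\mathfrak{g}+D(x,y)w-\theta(x,z)v+\theta(y,z)u+\kappa[u,v,w]_\mathfrak{h}$; it is a Hom-Lie triple system. A $\kappa$-weighted $\mathcal{O}$-operator from $\mathfrak{h}$ to $\mathfrak{g}$ with respect to $\theta$ is a linear map $\mathcal{A}:\mathfrak{h}\to\mathfrak{g}$ with $\mathcal{A}\circ\alpha_\mathfrak{h}=\alpha_\mathfrak{g}\circ\mathcal{A}$ and $[\mathcal{A}u,\mathcal{A}v,\mathcal{A}w]_\mathfrak{g}=\mathcal{A}\big(D(\mathcal{A}u,\mathcal{A}v)w-\theta(\mathcal{A}u,\mathcal{A}w)v+\theta(\mathcal{A}v,\mathcal{A}w)u+\kappa[u,v,w]_\mathfrak{h}\big)$ for all $u,v,w\in\mathfrak{h}$. A Nijenhuis operator on a Hom-Lie triple system $(L,[-,-,-],\alpha)$ is a linear map $N:L\to L$ with $N\circ\alpha=\alpha\circ N$ and, for all $x,y,z\in L$, $[Nx,Ny,Nz]=N([x,Ny,Nz]+[Nx,y,Nz]+[Nx,Ny,z])-N^2([Nx,y,z]+[x,Ny,z]+[x,y,Nz])+N^3[x,y,z]$. *)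

theory Defs
  imports "HOL-Analysis.Analysis"
begin

text \<open>Vector spaces over a field 'k of characteristic zero are represented by a type
 'v::ab_group_add together with a scalar multiplication s satisfying vector_space s.\<close>

definition trilinear ::
  "('k::field \<Rightarrow> 'a::ab_group_add \<Rightarrow> 'a) \<Rightarrow> ('a \<Rightarrow> 'a \<Rightarrow> 'a \<Rightarrow> 'a) \<Rightarrow> bool" where
  "trilinear s br \<longleftrightarrow>
     (\<forall>y z. Vector_Spaces.linear s s (\<lambda>x. br x y z)) \<and>
     (\<forall>x z. Vector_Spaces.linear s s (\<lambda>y. br x y z)) \<and>
     (\<forall>x y. Vector_Spaces.linear s s (\<lambda>z. br x y z))"

definition HomLTS ::
  "('k::field_char_0 \<Rightarrow> 'a::ab_group_add \<Rightarrow> 'a) \<Rightarrow> ('a \<Rightarrow> 'a \<Rightarrow> 'a \<Rightarrow> 'a) \<Rightarrow> ('a \<Rightarrow> 'a) \<Rightarrow> bool" where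
  "HomLTS s br al \<longleftrightarrow>
     vector_space s \<and> trilinear s br \<and> Vector_Spaces.linear s s al \<and>
     (\<forall>x y z. al (br x y z) = br (al x) (al y) (al z)) \<and>
     (\<forall>x y z. br x y z + br y x z = 0) \<and>
     (\<forall>x y z. br x y z + br z x y + br y z x = 0) \<and>
     (\<forall>a b x y z. br (al a) (al b) (br x y z) =
        br (br a b x) (al y) (al z) + br (al x) (br a b y) (al z) + br (al x) (al y) (br a b z))"

definition Dop :: "('g \<Rightarrow> 'g \<Rightarrow> 'v \<Rightarrow> 'v::ab_group_add) \<Rightarrow> 'g \<Rightarrow> 'g \<Rightarrow> 'v \<Rightarrow> 'v" where
  "Dop \<theta> x y = (\<lambda>v. \<theta> y x v - \<theta> x y v)"

text \<open>Representation of (g, brg, alg) on (V, beta); theta x y is an endomorphism of V,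
  and theta is bilinear into End(V). Composition of endomorphisms is written pointwise.\<close>
definition HomLTS_rep ::
  "('k::field_char_0 \<Rightarrow> 'g::ab_group_add \<Rightarrow> 'g) \<Rightarrow> ('g \<Rightarrow> 'g \<Rightarrow> 'g \<Rightarrow> 'g) \<Rightarrow> ('g \<Rightarrow> 'g) \<Rightarrow>
   ('k \<Rightarrow> 'v::ab_group_add \<Rightarrow> 'v) \<Rightarrow> ('v \<Rightarrow> 'v) \<Rightarrow> ('g \<Rightarrow> 'g \<Rightarrow> 'v \<Rightarrow> 'v) \<Rightarrow> bool" where
  "HomLTS_rep sg brg alg sv beta \<theta> \<longleftrightarrow>
     vector_space sv \<and> Vector_Spaces.linear sv sv beta \<and>
     (\<forall>x y. Vector_Spaces.linear sv sv (\<theta> x y)) \<and>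
     (\<forall>y v. Vector_Spaces.linear sg sv (\<lambda>x. \<theta> x y v)) \<and>
     (\<forall>x v. Vector_Spaces.linear sg sv (\<lambda>y. \<theta> x y v)) \<and>
     (\<forall>x y v. \<theta> (alg x) (alg y) (beta v) = beta (\<theta> x y v)) \<and>
     (\<forall>a b x y v.
        \<theta> (alg a) (alg b) (\<theta> x y v) - \<theta> (alg y) (alg b) (\<theta> x a v)
        - \<theta> (alg x) (brg y a b) (beta v) + Dop \<theta> (alg y) (alg a) (\<theta> x b v) = 0) \<and>
     (\<forall>a b x y v.
        \<theta> (alg a) (alg b) (Dop \<theta> x y v) - Dop \<theta> (alg x) (alg y) (\<theta> a b v)
        + \<theta> (brg x y a) (alg b) (beta v) + \<theta> (alg a) (brg x y b) (beta v) = 0)"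

definition HomLTS_action ::
  "('k::field_char_0 \<Rightarrow> 'g::ab_group_add \<Rightarrow> 'g) \<Rightarrow> ('g \<Rightarrow> 'g \<Rightarrow> 'g \<Rightarrow> 'g) \<Rightarrow> ('g \<Rightarrow> 'g) \<Rightarrow>
   ('k \<Rightarrow> 'h::ab_group_add \<Rightarrow> 'h) \<Rightarrow> ('h \<Rightarrow> 'h \<Rightarrow> 'h \<Rightarrow> 'h) \<Rightarrow> ('h \<Rightarrow> 'h) \<Rightarrow>
   ('g \<Rightarrow> 'g \<Rightarrow> 'h \<Rightarrow> 'h) \<Rightarrow> bool" where
  "HomLTS_action sg brg alg sh brh alh \<theta> \<longleftrightarrow>
     HomLTS_rep sg brg alg sh alh \<theta> \<and>
     (\<forall>x y u v w. \<theta> (alg x) (alg y) (brh u v w) =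
        brh (\<theta> x y u) (alh v) (alh w) + brh (alh u) (\<theta> x y v) (alh w) + brh (alh u) (alh v) (\<theta> x y w)) \<and>
     (\<forall>x y u v w. \<theta> (alg x) (alg y) (brh u v w) = 0 \<and> brh (alh u) (alh v) (\<theta> x y w) = 0)"

definition sd_scale :: "('k \<Rightarrow> 'g \<Rightarrow> 'g) \<Rightarrow> ('k \<Rightarrow> 'h \<Rightarrow> 'h) \<Rightarrow> 'k \<Rightarrow> 'g \<times> 'h \<Rightarrow> 'g \<times> 'h" where
  "sd_scale sg sh c p = (sg c (fst p), sh c (snd p))"

definition sd_twist :: "('g \<Rightarrow> 'g) \<Rightarrow> ('h \<Rightarrow> 'h) \<Rightarrow> 'g \<times> 'h \<Rightarrow> 'g \<times> 'h" where
  "sd_twist alg alh p = (alg (fst p), alh (snd p))"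

definition sd_bracket ::
  "('k \<Rightarrow> 'h::ab_group_add \<Rightarrow> 'h) \<Rightarrow> 'k \<Rightarrow> ('g \<Rightarrow> 'g \<Rightarrow> 'g \<Rightarrow> 'g) \<Rightarrow> ('h \<Rightarrow> 'h \<Rightarrow> 'h \<Rightarrow> 'h) \<Rightarrow>
   ('g \<Rightarrow> 'g \<Rightarrow> 'h \<Rightarrow> 'h) \<Rightarrow> 'g \<times> 'h \<Rightarrow> 'g \<times> 'h \<Rightarrow> 'g \<times> 'h \<Rightarrow> 'g \<times> 'h" where
  "sd_bracket sh \<kappa> brg brh \<theta> p q r =
     (brg (fst p) (fst q) (fst r),
      Dop \<theta> (fst p) (fst q) (snd r) - \<theta> (fst p) (fst r) (snd q) + \<theta> (fst q) (fst r) (snd p)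
      + sh \<kappa> (brh (snd p) (snd q) (snd r)))"

definition weighted_O_operator ::
  "('k \<Rightarrow> 'h::ab_group_add \<Rightarrow> 'h) \<Rightarrow> 'k \<Rightarrow> ('g \<Rightarrow> 'g \<Rightarrow> 'g \<Rightarrow> 'g) \<Rightarrow> ('g \<Rightarrow> 'g) \<Rightarrow>
   ('h \<Rightarrow> 'h \<Rightarrow> 'h \<Rightarrow> 'h) \<Rightarrow> ('h \<Rightarrow> 'h) \<Rightarrow> ('g \<Rightarrow> 'g \<Rightarrow> 'h \<Rightarrow> 'h) \<Rightarrow> ('h \<Rightarrow> 'g) \<Rightarrow> bool" where
  "weighted_O_operator sh \<kappa> brg alg brh alh \<theta> A \<longleftrightarrow>
     (\<forall>u. A (alh u) = alg (A u)) \<and>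
     (\<forall>u v w. brg (A u) (A v) (A w) =
        A (Dop \<theta> (A u) (A v) w - \<theta> (A u) (A w) v + \<theta> (A v) (A w) u + sh \<kappa> (brh u v w)))"

definition Nijenhuis ::
  "('k::field \<Rightarrow> 'a::ab_group_add \<Rightarrow> 'a) \<Rightarrow> ('a \<Rightarrow> 'a \<Rightarrow> 'a \<Rightarrow> 'a) \<Rightarrow> ('a \<Rightarrow> 'a) \<Rightarrow> ('a \<Rightarrow> 'a) \<Rightarrow> bool" where
  "Nijenhuis s br al N \<longleftrightarrow>
     Vector_Spaces.linear s s N \<and> (\<forall>x. N (al x) = al (N x)) \<and>
     (\<forall>x y z. br (N x) (N y) (N z) =
        N (br x (N y) (N z) + br (N x) y (N z) + br (N x) (N y) z)
        - N (N (br (N x) y z + br x (N y) z + br x y (N z)))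
        + N (N (N (br x y z))))"

definition N_op :: "('h \<Rightarrow> 'g::ab_group_add) \<Rightarrow> 'g \<times> 'h \<Rightarrow> 'g \<times> ('h::zero)" where
  "N_op A p = (fst p + A (snd p), 0)"

end

theory Submission
  imports Defs
begin

text \<open>The operator \<open>N\<^sub>A\<close> is idempotent, so \<open>N\<^sub>A\<^sup>3 = N\<^sub>A\<^sup>2 = N\<^sub>A\<close>, and its image \<open>\<gg> \<oplus> 0\<close> is closed
  under the semidirect bracket. Writing \<open>N\<^sub>A = id + K\<close> with \<open>K(x + u) = Au - u\<close>, trilinearity
  turns the Nijenhuis defect of such an operator into \<open>N\<^sub>A[Kp, Kq, Kr]\<close>. For \<open>p = x + u\<close>,
  \<open>q = y + v\<close>, \<open>r = z + w\<close> this is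
  \<open>[Au, Av, Aw] - A(D(Au, Av)w - \<theta>(Au, Aw)v + \<theta>(Av, Aw)u + \<kappa>[u, v, w])\<close>, so \<open>N\<^sub>A\<close> satisfies the
  Nijenhuis identity exactly when \<open>A\<close> satisfies the \<open>\<O>\<close>-operator identity; and \<open>N\<^sub>A\<close> commutes
  with the twist maps exactly when \<open>A \<alpha>\<^sub>\<hh> = \<alpha>\<^sub>\<gg> A\<close>.\<close>

lemma trilinear_linear:
  assumes "trilinear s br"
  shows "Vector_Spaces.linear s s (\<lambda>x. br x y z)" "Vector_Spaces.linear s s (\<lambda>y. br x y z)"
    "Vector_Spaces.linear s s (\<lambda>z. br x y z)"
  using assms unfolding trilinear_def by blast+

lemma trilinear_add:
  assumes "trilinear s br"
  shows "br (x + x') y z = br x y z + br x' y z" "br x (y + y') z = br x y z + br x y' z"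
    "br x y (z + z') = br x y z + br x y z'"
  using trilinear_linear[OF assms] by (simp_all add: Vector_Spaces.linear_iff)

lemma trilinear_scale:
  assumes "trilinear s br"
  shows "br (s c x) y z = s c (br x y z)" "br x (s c y) z = s c (br x y z)"
    "br x y (s c z) = s c (br x y z)"
  using trilinear_linear[OF assms] by (simp_all add: Vector_Spaces.linear_iff)

lemma trilinear_minus:
  assumes "trilinear s br"
  shows "br (- x) y z = - br x y z" "br x (- y) z = - br x y z" "br x y (- z) = - br x y z"
proof -
  interpret l1: Vector_Spaces.linear s s "\<lambda>x. br x y z" by (rule trilinear_linear[OF assms])
  interpret l2: Vector_Spaces.linear s s "\<lambda>y. br x y z" by (rule trilinear_linear[OF assms])
  interpret l3: Vector_Spaces.linear s s "\<lambda>z. br x y z" by (rule trilinear_linear[OF assms])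
  show "br (- x) y z = - br x y z" by (rule l1.neg)
  show "br x (- y) z = - br x y z" by (rule l2.neg)
  show "br x y (- z) = - br x y z" by (rule l3.neg)
qed

lemma trilinear_zero:
  assumes "trilinear s br"
  shows "br x y 0 = 0"
proof -
  interpret Vector_Spaces.linear s s "\<lambda>z. br x y z" by (rule trilinear_linear[OF assms])
  show ?thesis by (rule zero)
qed

lemma trilinear_diff:
  assumes "trilinear s br"
  shows "br (x - x') y z = br x y z - br x' y z" "br x (y - y') z = br x y z - br x y' z"
    "br x y (z - z') = br x y z - br x y z'"
proof -
  interpret l1: Vector_Spaces.linear s s "\<lambda>x. br x y z" by (rule trilinear_linear[OF assms])
  interpret l2: Vector_Spaces.linear s s "\<lambda>y. br x y z" by (rule trilinear_linear[OF assms])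
  interpret l3: Vector_Spaces.linear s s "\<lambda>z. br x y z" by (rule trilinear_linear[OF assms])
  show "br (x - x') y z = br x y z - br x' y z" by (rule l1.diff)
  show "br x (y - y') z = br x y z - br x y' z" by (rule l2.diff)
  show "br x y (z - z') = br x y z - br x y z'" by (rule l3.diff)
qed

lemma trilinear_diff_expand:
  assumes "trilinear s br"
  shows "br (x' - x) (y' - y) (z' - z) =
    br x' y' z' - (br x y' z' + br x' y z' + br x' y' z) + (br x' y z + br x y' z + br x y z') - br x y z"
  by (simp add: trilinear_diff[OF assms] algebra_simps)

lemma idempotent_Nijenhuis_identity_iff:
  assumes br: "trilinear s br" and N: "Vector_Spaces.linear s s N"
    and idem: "\<And>x. N (N x) = N x"
    and closed: "br (N x) (N y) (N z) = N (br (N x) (N y) (N z))"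
  shows "br (N x) (N y) (N z) =
        N (br x (N y) (N z) + br (N x) y (N z) + br (N x) (N y) z)
        - N (N (br (N x) y z + br x (N y) z + br x y (N z)))
        + N (N (N (br x y z)))
     \<longleftrightarrow> N (br (N x - x) (N y - y) (N z - z)) = 0"
proof -
  interpret N: Vector_Spaces.linear s s N by (rule N)
  have "N (br (N x - x) (N y - y) (N z - z)) =
      br (N x) (N y) (N z) -
        (N (br x (N y) (N z) + br (N x) y (N z) + br (N x) (N y) z)
        - N (N (br (N x) y z + br x (N y) z + br x y (N z)))
        + N (N (N (br x y z))))"
    unfolding trilinear_diff_expand[OF br] idem by (simp add: N.add N.diff flip: closed)
  then show ?thesis by simp
qed

lemma vector_space_sd_scale:
  assumes "vector_space sg" and "vector_space sh"
  shows "vector_space (sd_scale sg sh)"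
  using assms unfolding vector_space_def sd_scale_def by auto

lemma HomLTS_rep_linear:
  assumes "HomLTS_rep sg brg alg sh alh \<theta>"
  shows "Vector_Spaces.linear sg sh (\<lambda>x. \<theta> x y v)" "Vector_Spaces.linear sg sh (\<lambda>y. \<theta> x y v)"
    "Vector_Spaces.linear sh sh (\<theta> x y)"
  using assms unfolding HomLTS_rep_def by blast+

lemma trilinear_sd_bracket:
  assumes brg: "trilinear sg brg" and brh: "trilinear sh brh"
    and rep: "HomLTS_rep sg brg alg sh alh \<theta>"
  shows "trilinear (sd_scale sg sh) (sd_bracket sh \<kappa> brg brh \<theta>)"
proof -
  interpret vh: vector_space sh using rep by (simp add: HomLTS_rep_def)
  note \<theta>_lin = HomLTS_rep_linear[OF rep, unfolded Vector_Spaces.linear_iff]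
  have vs_sd: "vector_space (sd_scale sg sh)"
    using \<theta>_lin(1) vh.vector_space_axioms by (simp add: vector_space_sd_scale)
  show ?thesis
    unfolding trilinear_def Vector_Spaces.linear_iff
    using vs_sd
    by (simp add: sd_bracket_def sd_scale_def Dop_def \<theta>_lin trilinear_add[OF brg] trilinear_add[OF brh]
        trilinear_scale[OF brg] trilinear_scale[OF brh] vh.scale_right_distrib
        vh.scale_right_diff_distrib vh.scale_left_commute[of \<kappa>] algebra_simps)
qed

lemma linear_N_op:
  assumes "Vector_Spaces.linear sh sg A"
  shows "Vector_Spaces.linear (sd_scale sg sh) (sd_scale sg sh) (N_op A)"
proof -
  interpret A: Vector_Spaces.linear sh sg A by (rule assms)
  have "vector_space (sd_scale sg sh)"
    by (rule vector_space_sd_scale) (rule A.vs2.vector_space_axioms, rule A.vs1.vector_space_axioms)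
  then show ?thesis
    unfolding Vector_Spaces.linear_iff
    by (simp add: N_op_def sd_scale_def A.add A.scale A.vs2.scale_right_distrib)
qed

lemma N_op_idem:
  assumes "Vector_Spaces.linear sh sg A"
  shows "N_op A (N_op A p) = N_op A p"
proof -
  interpret A: Vector_Spaces.linear sh sg A by (rule assms)
  show ?thesis by (simp add: N_op_def A.zero)
qed

lemma sd_bracket_N_op_closed:
  assumes brh: "trilinear sh brh" and rep: "HomLTS_rep sg brg alg sh alh \<theta>"
    and A: "Vector_Spaces.linear sh sg A"
  shows "sd_bracket sh \<kappa> brg brh \<theta> (N_op A p) (N_op A q) (N_op A r) =
    N_op A (sd_bracket sh \<kappa> brg brh \<theta> (N_op A p) (N_op A q) (N_op A r))"
proof -
  interpret A: Vector_Spaces.linear sh sg A by (rule A)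
  have "\<theta> x y 0 = 0" for x y
    by (rule module_hom.zero[OF module_hom_linearI[OF HomLTS_rep_linear(3)[OF rep]]])
  then show ?thesis
    by (simp add: N_op_def sd_bracket_def Dop_def trilinear_zero[OF brh] A.zero A.vs1.scale_zero_right)
qed

lemma N_op_sd_bracket_defect:
  assumes brh: "trilinear sh brh" and rep: "HomLTS_rep sg brg alg sh alh \<theta>"
    and A: "Vector_Spaces.linear sh sg A"
  shows "N_op A (sd_bracket sh \<kappa> brg brh \<theta>
      (N_op A (x, u) - (x, u)) (N_op A (y, v) - (y, v)) (N_op A (z, w) - (z, w))) =
    (brg (A u) (A v) (A w) -
      A (Dop \<theta> (A u) (A v) w - \<theta> (A u) (A w) v + \<theta> (A v) (A w) u + sh \<kappa> (brh u v w)), 0)"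
proof -
  interpret A: Vector_Spaces.linear sh sg A by (rule A)
  have "\<theta> a b (- t) = - \<theta> a b t" for a b t
    by (rule module_hom.neg[OF module_hom_linearI[OF HomLTS_rep_linear(3)[OF rep]]])
  then show ?thesis
    by (simp add: N_op_def sd_bracket_def Dop_def trilinear_minus[OF brh] A.add A.neg A.diff
        A.vs1.scale_minus_right algebra_simps)
qed

lemma N_op_commute_sd_twist_iff:
  assumes "Vector_Spaces.linear sg sg alg" and "Vector_Spaces.linear sh sh alh"
    and "Vector_Spaces.linear sh sg A"
  shows "(\<forall>p. N_op A (sd_twist alg alh p) = sd_twist alg alh (N_op A p)) \<longleftrightarrow>
    (\<forall>u. A (alh u) = alg (A u))"
proof -
  interpret alg: Vector_Spaces.linear sg sg alg by fact
  interpret alh: Vector_Spaces.linear sh sh alh by fact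
  have "N_op A (sd_twist alg alh (x, u)) = sd_twist alg alh (N_op A (x, u)) \<longleftrightarrow>
      A (alh u) = alg (A u)" for x u
    by (simp add: N_op_def sd_twist_def alg.add alh.zero)
  then show ?thesis by auto
qed

theorem mainTheorem3:
  fixes sg :: "'k::field_char_0 \<Rightarrow> 'g::ab_group_add \<Rightarrow> 'g"
    and sh :: "'k \<Rightarrow> 'h::ab_group_add \<Rightarrow> 'h"
    and \<kappa> :: 'k
    and brg :: "'g \<Rightarrow> 'g \<Rightarrow> 'g \<Rightarrow> 'g" and alg :: "'g \<Rightarrow> 'g"
    and brh :: "'h \<Rightarrow> 'h \<Rightarrow> 'h \<Rightarrow> 'h" and alh :: "'h \<Rightarrow> 'h"
    and \<theta> :: "'g \<Rightarrow> 'g \<Rightarrow> 'h \<Rightarrow> 'h"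
    and A :: "'h \<Rightarrow> 'g"
  assumes "HomLTS sg brg alg"
    and "HomLTS sh brh alh"
    and "HomLTS_action sg brg alg sh brh alh \<theta>"
    and "Vector_Spaces.linear sh sg A"
  shows "weighted_O_operator sh \<kappa> brg alg brh alh \<theta> A \<longleftrightarrow>
         Nijenhuis (sd_scale sg sh) (sd_bracket sh \<kappa> brg brh \<theta>) (sd_twist alg alh) (N_op A)"
proof -
  have brg: "trilinear sg brg" and alg: "Vector_Spaces.linear sg sg alg"
    using assms(1) unfolding HomLTS_def by auto
  have brh: "trilinear sh brh" and alh: "Vector_Spaces.linear sh sh alh"
    using assms(2) unfolding HomLTS_def by auto
  have rep: "HomLTS_rep sg brg alg sh alh \<theta>"
    using assms(3) unfolding HomLTS_action_def by auto
  have O_identity_iff: "(\<forall>p q r. N_op A (sd_bracket sh \<kappa> brg brh \<theta>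
        (N_op A p - p) (N_op A q - q) (N_op A r - r)) = 0) \<longleftrightarrow>
      (\<forall>u v w. brg (A u) (A v) (A w) =
        A (Dop \<theta> (A u) (A v) w - \<theta> (A u) (A w) v + \<theta> (A v) (A w) u + sh \<kappa> (brh u v w)))"
    by (simp add: split_paired_All N_op_sd_bracket_defect[OF brh rep assms(4)] zero_prod_def)
  show ?thesis
    unfolding weighted_O_operator_def Nijenhuis_def
      N_op_commute_sd_twist_iff[OF alg alh assms(4)]
      idempotent_Nijenhuis_identity_iff[where br = "sd_bracket sh \<kappa> brg brh \<theta>" and N = "N_op A",
        OF trilinear_sd_bracket[OF brg brh rep]
        linear_N_op[OF assms(4)] N_op_idem[OF assms(4)] sd_bracket_N_op_closed[OF brh rep assms(4)]]
      O_identity_iff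
    using linear_N_op[OF assms(4)] by blast
qed

end
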